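(* Let $p_1,\dots,p_n\ge0$ and unit vectors $\vec a_1,\dots,\vec a_n\in\mathbb{R}^3$ with $\sum_ip_i=2$, $\sum_ip_i\vec a_i=\vec0$, and suppose all $\vec a_i$ lie in a common plane through the origin (this is automatic when $n=3$). Let $f(\vec x)=\sum_ip_i\Theta(\vec x\cdot\vec a_i)$. Choose coordinates with the $z$-axis orthogonal to that plane. Then there is a rotation $R$ about the $z$-axis by an angle in $[0,\pi/2]$ such that $f(R\vec v_{s_xs_ys_z})\le1$ for all $(s_x,s_y,s_z)\in\{\pm1\}^3$.
   Context: $\Theta(x)=x$ for $x\ge0$ and $0$ for $x<0$; $\vec v_{s_xs_ys_z}=(s_x,s_y,s_z)^T$. *)

theory Defs
  imports "HOL-Analysis.Analysis"
begin

definition Theta :: "real \<Rightarrow> real" where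
  "Theta x = (if x \<ge> 0 then x else 0)"

definition vsign :: "real \<Rightarrow> real \<Rightarrow> real \<Rightarrow> real^3" where
  "vsign sx sy sz = vector [sx, sy, sz]"

definition rotz :: "real \<Rightarrow> real^3 \<Rightarrow> real^3" where
  "rotz t v = vector [cos t * v$1 - sin t * v$2, sin t * v$1 + cos t * v$2, v$3]"

end

theory Submission
  imports Defs
begin

text \<open>Writing \<open>\<Theta>(x) = (x + |x|)/2\<close> and using \<open>\<Sum> p\<^sub>i a\<^sub>i = 0\<close>, the linear part of
  \<open>f\<close> vanishes, so \<open>f(R v\<^sub>s) = \<Sum> p\<^sub>i |s\<^sub>x A\<^sub>i + s\<^sub>y B\<^sub>i| / 2\<close>, where \<open>(A\<^sub>i, B\<^sub>i)\<close> are the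
  in-plane coordinates of \<open>R\<^sup>-\<^sup>1 a\<^sub>i\<close>. Up to a global sign only two values occur,
  \<open>P = \<Sum> p\<^sub>i |A\<^sub>i + B\<^sub>i|\<close> and \<open>M = \<Sum> p\<^sub>i |A\<^sub>i - B\<^sub>i|\<close>, and \<open>|A + B| + |A - B| \<le> 2\<close> for a unit
  vector gives \<open>P + M \<le> 4\<close>. Rotating by \<open>\<pi>/2\<close> interchanges \<open>P\<close> and \<open>M\<close>, so by the
  intermediate value theorem \<open>P = M\<close> for some angle in \<open>[0, \<pi>/2]\<close>, and then both are
  at most 2.\<close>

lemma Theta_eq_half_add_abs: "Theta x = (x + \<bar>x\<bar>) / 2"
  by (simp add: Theta_def)

lemma sum_Theta_eq_half_sum_abs:
  fixes x p :: "'i \<Rightarrow> real"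
  assumes "(\<Sum>i\<in>I. p i * x i) = 0"
  shows "(\<Sum>i\<in>I. p i * Theta (x i)) = (\<Sum>i\<in>I. p i * \<bar>x i\<bar>) / 2"
proof -
  have "(\<Sum>i\<in>I. p i * Theta (x i)) = ((\<Sum>i\<in>I. p i * x i) + (\<Sum>i\<in>I. p i * \<bar>x i\<bar>)) / 2"
    by (simp add: Theta_eq_half_add_abs sum_divide_distrib sum.distrib[symmetric] algebra_simps)
  with assms show ?thesis
    by simp
qed

lemma rotz_nth:
  "rotz t w $ 1 = cos t * w $ 1 - sin t * w $ 2"
  "rotz t w $ 2 = sin t * w $ 1 + cos t * w $ 2"
  "rotz t w $ 3 = w $ 3"
  by (simp_all add: rotz_def)

lemma rotz_0 [simp]: "rotz 0 w = w"
  by (simp add: vec_eq_iff forall_3 rotz_nth)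

lemma linear_rotz: "linear (rotz t)"
  by (rule linearI) (simp_all add: vec_eq_iff forall_3 rotz_nth algebra_simps)

lemma inner_rotz: "rotz t v \<bullet> w = v \<bullet> rotz (-t) w"
  by (simp add: inner_vec_def sum_3 rotz_nth algebra_simps)

lemma rotz_minus_rotz [simp]: "rotz (-t) (rotz t w) = w"
proof -
  have "cos t * (cos t * x) + sin t * (sin t * x) = x" for x :: real
    using sin_cos_squared_add[of t] by algebra
  note rotate_back = this
  show ?thesis
    by (simp add: vec_eq_iff forall_3 rotz_nth algebra_simps rotate_back)
qed

lemma norm_rotz: "norm (rotz t w) = norm w"
  by (simp add: norm_eq_sqrt_inner inner_rotz[of t])

lemma rotz_minus_pi_half:
  "rotz (- (pi / 2)) w $ 1 = w $ 2" "rotz (- (pi / 2)) w $ 2 = - w $ 1"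
  by (simp_all add: rotz_nth)

lemma inner_vsign_planar:
  assumes "w $ 3 = 0"
  shows "vsign sx sy sz \<bullet> w = sx * w $ 1 + sy * w $ 2"
  using assms by (simp add: vsign_def inner_vec_def sum_3)

lemma sum_Theta_vsign_planar:
  fixes p :: "'i \<Rightarrow> real" and w :: "'i \<Rightarrow> real^3"
  assumes planar: "\<And>i. i \<in> I \<Longrightarrow> w i $ 3 = 0"
    and balanced: "(\<Sum>i\<in>I. p i *\<^sub>R w i) = 0"
    and signs: "sx \<in> {-1, 1}" "sy \<in> {-1, 1}"
  shows "(\<Sum>i\<in>I. p i * Theta (vsign sx sy sz \<bullet> w i))
           = (\<Sum>i\<in>I. p i * \<bar>w i $ 1 + sx * sy * w i $ 2\<bar>) / 2"
proof -
  have "(\<Sum>i\<in>I. p i * (sx * w i $ 1 + sy * w i $ 2))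
          = sx * (\<Sum>i\<in>I. p i *\<^sub>R w i) $ 1 + sy * (\<Sum>i\<in>I. p i *\<^sub>R w i) $ 2"
    by (simp add: sum_distrib_left sum.distrib algebra_simps)
  then have "(\<Sum>i\<in>I. p i * (sx * w i $ 1 + sy * w i $ 2)) = 0"
    using balanced by simp
  then have "(\<Sum>i\<in>I. p i * Theta (vsign sx sy sz \<bullet> w i))
               = (\<Sum>i\<in>I. p i * \<bar>sx * w i $ 1 + sy * w i $ 2\<bar>) / 2"
    using sum_Theta_eq_half_sum_abs[of p "\<lambda>i. sx * w i $ 1 + sy * w i $ 2" I]
    by (simp add: inner_vsign_planar planar cong: sum.cong)
  also have "\<dots> = (\<Sum>i\<in>I. p i * \<bar>w i $ 1 + sx * sy * w i $ 2\<bar>) / 2"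
    using signs by (auto simp: abs_minus_commute intro!: sum.cong)
  finally show ?thesis .
qed

lemma sum_abs_add_sum_abs_diff_le:
  fixes p :: "'i \<Rightarrow> real" and w :: "'i \<Rightarrow> real^3"
  assumes "\<And>i. i \<in> I \<Longrightarrow> p i \<ge> 0" and "\<And>i. i \<in> I \<Longrightarrow> norm (w i) \<le> 1"
  shows "(\<Sum>i\<in>I. p i * \<bar>w i $ 1 + w i $ 2\<bar>) + (\<Sum>i\<in>I. p i * \<bar>w i $ 1 - w i $ 2\<bar>)
           \<le> 2 * sum p I"
proof -
  have "(\<Sum>i\<in>I. p i * \<bar>w i $ 1 + w i $ 2\<bar>) + (\<Sum>i\<in>I. p i * \<bar>w i $ 1 - w i $ 2\<bar>)
          = (\<Sum>i\<in>I. p i * (\<bar>w i $ 1 + w i $ 2\<bar> + \<bar>w i $ 1 - w i $ 2\<bar>))"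
    by (simp add: sum.distrib[symmetric] algebra_simps)
  also have "\<dots> \<le> (\<Sum>i\<in>I. p i * 2)"
  proof (rule sum_mono, rule mult_left_mono)
    fix i assume "i \<in> I"
    then have "\<bar>w i $ 1\<bar> \<le> 1" "\<bar>w i $ 2\<bar> \<le> 1"
      using assms(2) component_le_norm_cart[of "w i"] by (meson order_trans)+
    then show "\<bar>w i $ 1 + w i $ 2\<bar> + \<bar>w i $ 1 - w i $ 2\<bar> \<le> 2"
      by linarith
    show "0 \<le> p i"
      using assms(1) \<open>i \<in> I\<close> .
  qed
  finally show ?thesis
    by (simp add: sum_distrib_right[symmetric] mult.commute)
qed

lemma IVT_swap:
  fixes f g :: "real \<Rightarrow> real"
  assumes "a \<le> b" "continuous_on {a..b} f" "continuous_on {a..b} g"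
    and "f b = g a" "g b = f a"
  shows "\<exists>t. a \<le> t \<and> t \<le> b \<and> f t = g t"
proof -
  have cont: "continuous_on {a..b} (\<lambda>t. f t - g t)"
    using assms by (intro continuous_intros)
  have "f a - g a \<le> 0 \<and> 0 \<le> f b - g b \<or> f b - g b \<le> 0 \<and> 0 \<le> f a - g a"
    using assms by linarith
  then obtain t where "a \<le> t" "t \<le> b" "f t - g t = 0"
    using IVT'[OF _ _ \<open>a \<le> b\<close> cont] IVT2'[OF _ _ \<open>a \<le> b\<close> cont] by blast
  then show ?thesis
    by auto
qed

theorem mainTheorem9:
  fixes n :: nat and p :: "nat \<Rightarrow> real" and a :: "nat \<Rightarrow> real^3"
  assumes p_nonneg: "\<And>i. i < n \<Longrightarrow> p i \<ge> 0"
    and a_unit: "\<And>i. i < n \<Longrightarrow> norm (a i) = 1"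
    and p_sum: "(\<Sum>i<n. p i) = 2"
    and balanced: "(\<Sum>i<n. p i *\<^sub>R a i) = 0"
    and planar: "\<And>i. i < n \<Longrightarrow> a i $ 3 = 0"
  shows "\<exists>t. 0 \<le> t \<and> t \<le> pi / 2 \<and>
           (\<forall>sx \<in> {-1, 1}. \<forall>sy \<in> {-1, 1}. \<forall>sz \<in> {-1, 1}.
              (\<Sum>i<n. p i * Theta (rotz t (vsign sx sy sz) \<bullet> a i)) \<le> 1)"
proof -
  define W where "W t \<sigma> = (\<Sum>i<n. p i * \<bar>rotz (-t) (a i) $ 1 + \<sigma> * rotz (-t) (a i) $ 2\<bar>)"
    for t \<sigma>
  have f_eq: "(\<Sum>i<n. p i * Theta (rotz t (vsign sx sy sz) \<bullet> a i)) = W t (sx * sy) / 2"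
    if "sx \<in> {-1, 1}" "sy \<in> {-1, 1}" for t sx sy sz
  proof -
    have "(\<Sum>i<n. p i *\<^sub>R rotz (-t) (a i)) = rotz (-t) (\<Sum>i<n. p i *\<^sub>R a i)"
      by (simp add: linear_sum[OF linear_rotz] linear_scale[OF linear_rotz])
    then show ?thesis
      unfolding inner_rotz W_def using that planar balanced
      by (intro sum_Theta_vsign_planar) (simp_all add: rotz_nth linear_0[OF linear_rotz])
  qed
  have W_le: "W t 1 + W t (-1) \<le> 4" for t
    using sum_abs_add_sum_abs_diff_le[of "{..<n}" p "\<lambda>i. rotz (-t) (a i)"]
    by (simp add: W_def p_nonneg a_unit norm_rotz p_sum)
  have "continuous_on {0..pi/2} (\<lambda>t. W t \<sigma>)" for \<sigma>
    unfolding W_def rotz_nth by (intro continuous_intros)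
  moreover have "W (pi/2) 1 = W 0 (-1)" "W (pi/2) (-1) = W 0 1"
    unfolding W_def by (simp_all add: rotz_minus_pi_half abs_minus_commute add.commute)
  ultimately obtain t where t: "0 \<le> t" "t \<le> pi/2" "W t 1 = W t (-1)"
    using IVT_swap[of 0 "pi/2" "\<lambda>t. W t 1" "\<lambda>t. W t (-1)"] by auto
  have "W t \<sigma> \<le> 2" if "\<sigma> \<in> {-1, 1}" for \<sigma>
    using that W_le[of t] t(3) by auto
  then show ?thesis
    using t(1,2) by (auto simp: f_eq)
qed

end
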